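(* Let $S:\mathcal{T}\to\mathcal{T}^{pl}$ be a section of the forget-planarity projection $\pi:\mathcal{T}^{pl}\to\mathcal{T}$, i.e. a linear map sending each non-planar rooted tree $t$ to a planar rooted tree $S(t)$ with $\pi(S(t))=t$. Let $\widetilde{\Psi}_S:=\pi\circ\Psi\circ S:\mathcal{T}\to\mathcal{T}$. Then for every non-planar rooted tree $t$, $$\widetilde{\Psi}_S(t)=\sum_{s\in T}\beta_S(s,t)\,s,$$ where the $\beta_S(s,t)$ are nonnegative integers (depending on $S$), given by $\beta_S(s,t)=\tilde b(s,S(t))/sym(s)$, where $sym(s)$ is the symmetry factor of $s$ and $\tilde b(s,\tau)$ is the number of bijections $\varphi:V(s)\to V(\tau)$ which are increasing from $(V(s),<)$ into $(V(\tau),\lll)$ and such that $\varphi^{-1}$ is increasing from $(V(\tau),<)$ into $(V(s),<)$.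
   Context: $\mathcal{T}^{pl}$ (resp. $\mathcal{T}$) is the vector space spanned by the set $T^{pl}$ of planar rooted trees (resp. the set $T$ of non-planar rooted trees); a rooted tree is a finite oriented tree with a root having no outgoing edge, every other vertex having exactly one outgoing edge, and it is planar if the branches at each vertex are ordered left to right. $\bullet$ is the one-vertex tree, $V(\sigma)$ the vertex set. For planar trees, $B_+(\tau_1\cdots\tau_k)$ joins the roots of the ordered trees $\tau_i$ to a new root; the left Butcher product is $\sigma\circ\!\!\searrow B_+(\tau_1\cdots\tau_k):=B_+(\sigma\tau_1\cdots\tau_k)$, and each planar tree with at least two vertices is uniquely $\sigma_1\circ\!\!\searrow\sigma_2$. The left grafting is $\sigma\searrow\tau=\sum_{v\in V(\tau)}\sigma\searrow_v\tau$, where $\sigma\searrow_v\tau$ grafts the root of $\sigma$ onto $v$ as the leftmost branch at $v$. $\Psi:\mathcal{T}^{pl}\to\mathcal{T}^{pl}$ is the linear map with $\Psi(\bullet)=\bullet$ and $\Psi(\sigma_1\circ\!\!\searrow\sigma_2)=\Psi(\sigma_1)\searrow\Psi(\sigma_2)$. Partial order $<$: $v<w$ if $v\ne w$ and the path from the root to $w$ passes through $v$. Total order $\lll$ on a planar tree $\tau=\tau_1\circ\!\!\searrow\tau_2$, recursively: $v\lll w$ iff ($v\lll w$ within $V(\tau_1)$ or within $V(\tau_2)$) or ($v\in V(\tau_2)$, $w\in V(\tau_1)$). Increasing means order-preserving. $sym(s)$ is the number of bijections $V(s)\to V(s)$ increasing for $<$ in both directions (tree automorphisms). *)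

theory Defs
  imports Complex_Main "HOL-Library.Multiset" "HOL-Library.FuncSet" "HOL-Library.Sublist"
begin

datatype ptree = PNode "ptree list"

datatype utree = UNode "utree multiset"

definition bullet :: ptree where "bullet = PNode []"

fun forget :: "ptree \<Rightarrow> utree" where
  "forget (PNode ts) = UNode (mset (map forget ts))"

text \<open>Vertices of a planar tree, encoded as paths of child indices from the root
  (the root is the empty path; child i of a vertex is obtained by appending i).\<close>
fun is_vertex :: "ptree \<Rightarrow> nat list \<Rightarrow> bool" where
  "is_vertex (PNode ts) [] = True"
| "is_vertex (PNode ts) (i # p) = (i < length ts \<and> is_vertex (ts ! i) p)"

definition vset :: "ptree \<Rightarrow> nat list set" where
  "vset t = {v. is_vertex t v}"

text \<open>The partial order: v < w iff v \<noteq> w and the path from the root to w passes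
  through v, i.e. v is a strict prefix of w.\<close>
abbreviation below :: "nat list \<Rightarrow> nat list \<Rightarrow> bool" where
  "below v w \<equiv> strict_prefix v w"

fun graft_at :: "ptree \<Rightarrow> nat list \<Rightarrow> ptree \<Rightarrow> ptree" where
  "graft_at \<sigma> [] (PNode ts) = PNode (\<sigma> # ts)"
| "graft_at \<sigma> (i # p) (PNode ts) = PNode (ts[i := graft_at \<sigma> p (ts ! i)])"

text \<open>Elements of the vector space with nonnegative integer coefficients are
  represented as multisets of trees. Left grafting sigma \<searrow> tau, and its bilinear extension.\<close>
definition graft :: "ptree \<Rightarrow> ptree \<Rightarrow> ptree multiset" where
  "graft \<sigma> \<tau> = image_mset (\<lambda>v. graft_at \<sigma> v \<tau>) (mset_set (vset \<tau>))"

definition graft_ms :: "ptree multiset \<Rightarrow> ptree multiset \<Rightarrow> ptree multiset" where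
  "graft_ms A B = \<Sum>\<^sub># (image_mset (\<lambda>a. \<Sum>\<^sub># (image_mset (\<lambda>b. graft a b) B)) A)"

text \<open>Psi(bullet) = bullet, Psi(sigma1 o\<searrow> sigma2) = Psi(sigma1) \<searrow> Psi(sigma2), where
  sigma1 o\<searrow> PNode ts = PNode (sigma1 # ts).\<close>
fun Psi :: "ptree \<Rightarrow> ptree multiset" where
  "Psi (PNode []) = {# PNode [] #}"
| "Psi (PNode (t1 # ts)) = graft_ms (Psi t1) (Psi (PNode ts))"

text \<open>Total order lll on the vertices of a planar tree tau = tau1 o\<searrow> tau2:
  vertices of tau1 are the paths 0 # p, vertices of tau2 are [] and Suc i # p
  (corresponding to i # p in tau2).\<close>
fun dec_path :: "nat list \<Rightarrow> nat list" where
  "dec_path [] = []"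
| "dec_path (i # p) = (i - 1) # p"

fun lll :: "ptree \<Rightarrow> nat list \<Rightarrow> nat list \<Rightarrow> bool" where
  "lll (PNode []) v w = False"
| "lll (PNode (t1 # ts)) v w =
     (case (v, w) of
        (0 # p, 0 # q) \<Rightarrow> lll t1 p q
      | (0 # p, _) \<Rightarrow> False
      | (_, 0 # q) \<Rightarrow> True
      | _ \<Rightarrow> lll (PNode ts) (dec_path v) (dec_path w))"

definition symf :: "ptree \<Rightarrow> nat" where
  "symf s = card {\<phi> \<in> vset s \<rightarrow>\<^sub>E vset s. bij_betw \<phi> (vset s) (vset s)
      \<and> (\<forall>v\<in>vset s. \<forall>w\<in>vset s. below v w \<longrightarrow> below (\<phi> v) (\<phi> w))
      \<and> (\<forall>x\<in>vset s. \<forall>y\<in>vset s. below x y \<longrightarrow>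
            below (inv_into (vset s) \<phi> x) (inv_into (vset s) \<phi> y))}"

definition btilde :: "ptree \<Rightarrow> ptree \<Rightarrow> nat" where
  "btilde s \<tau> = card {\<phi> \<in> vset s \<rightarrow>\<^sub>E vset \<tau>. bij_betw \<phi> (vset s) (vset \<tau>)
      \<and> (\<forall>v\<in>vset s. \<forall>w\<in>vset s. below v w \<longrightarrow> lll \<tau> (\<phi> v) (\<phi> w))
      \<and> (\<forall>x\<in>vset \<tau>. \<forall>y\<in>vset \<tau>. below x y \<longrightarrow>
            below (inv_into (vset s) \<phi> x) (inv_into (vset s) \<phi> y))}"

end

theory Submission
  imports Defs "HOL-Combinatorics.List_Permutation"
begin

text \<open>
  Follow the vertices of \<open>\<tau>\<close> through the recursive graftings defining \<open>Psi \<tau>\<close>: every term \<open>s\<close>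
  then comes with a bijection from the vertices of \<open>\<tau>\<close> onto those of \<open>s\<close>, and pulling back
  the tree order of \<open>s\<close> along it gives a forest order on the vertices of \<open>\<tau>\<close> that contains
  the tree order of \<open>\<tau>\<close> and is contained in \<open>lll \<tau>\<close>. This is a bijection from the terms of
  \<open>Psi \<tau>\<close> onto all such admissible orders: an admissible order of \<open>t1 \<circ>\<searrow> \<tau>2\<close> restricts
  to admissible orders of \<open>t1\<close> and \<open>\<tau>2\<close>, and the grafting vertex is recovered as the highest
  vertex of \<open>\<tau>2\<close> below the root of \<open>t1\<close>. The bijections counted by \<open>btilde \<sigma> \<tau>\<close> are exactly
  the isomorphisms from the tree order of \<open>\<sigma>\<close> onto some admissible order, and each admissible
  order isomorphic to the tree order of \<open>\<sigma>\<close> is hit by \<open>symf \<sigma>\<close> of them. Hence \<open>btilde \<sigma> \<tau>\<close>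
  is \<open>symf \<sigma>\<close> times the multiplicity of \<open>forget \<sigma>\<close> in the projection of \<open>Psi \<tau>\<close>.
\<close>

lemma strict_prefix_same_prefix_iff [simp]: "strict_prefix (v @ a) (v @ b) \<longleftrightarrow> strict_prefix a b"
  by (induction v) auto

lemma strict_prefixes_eq_takes: "{v. strict_prefix v w} = (\<lambda>k. take k w) ` {..<length w}"
proof (intro set_eqI iffI)
  fix v assume "v \<in> {v. strict_prefix v w}"
  then have sp: "strict_prefix v w" by simp
  then have "v = take (length v) w"
    by (metis append_eq_conv_conj prefixE prefix_order.less_imp_le)
  moreover have "length v < length w" using sp by (rule prefix_length_less)
  ultimately show "v \<in> (\<lambda>k. take k w) ` {..<length w}" by blast
next
  fix v assume "v \<in> (\<lambda>k. take k w) ` {..<length w}"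
  then obtain k where "k < length w" "v = take k w" by blast
  then have "strict_prefix v w"
    by (metis prefix_order.antisym_conv1 prefix_order.less_le_not_le strict_prefixI'
        take_Suc_conv_app_nth take_is_prefix)
  then show "v \<in> {v. strict_prefix v w}" by simp
qed

lemma mset_eq_if_bij_betw_nth:
  assumes "bij_betw \<pi> {..<length xs} {..<length ys}" "\<forall>i<length xs. xs ! i = ys ! \<pi> i"
  shows "mset xs = mset ys"
proof -
  have "mset xs = image_mset (nth xs) (mset_set {..<length xs})"
    by (metis lessThan_atLeast0 map_nth mset_map mset_upt)
  also have "\<dots> = image_mset (\<lambda>i. ys ! \<pi> i) (mset_set {..<length xs})"
    using assms(2) by (intro image_mset_cong) auto
  also have "\<dots> = image_mset (nth ys) (image_mset \<pi> (mset_set {..<length xs}))"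
    by (simp add: image_mset.compositionality o_def)
  also have "image_mset \<pi> (mset_set {..<length xs}) = mset_set {..<length ys}"
    using assms(1) by (simp add: image_mset_mset_set bij_betw_def)
  also have "image_mset (nth ys) (mset_set {..<length ys}) = mset ys"
    by (metis lessThan_atLeast0 map_nth mset_map mset_upt)
  finally show ?thesis .
qed

lemma image_mset_sum_mset: "image_mset f (\<Sum>\<^sub># MM) = \<Sum>\<^sub># (image_mset (image_mset f) MM)"
  by (induction MM) auto

lemma mset_set_Times:
  assumes "finite A" "finite B"
  shows "mset_set (A \<times> B) = \<Sum>\<^sub># (image_mset (\<lambda>a. image_mset (Pair a) (mset_set B)) (mset_set A))"
  using assms(1)
proof (induction A rule: finite_induct)
  case (insert a A)
  have "mset_set (Pair a ` B \<union> A \<times> B) = mset_set (Pair a ` B) + mset_set (A \<times> B)"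
    using insert assms(2) by (intro mset_set_Union) auto
  moreover have "insert a A \<times> B = Pair a ` B \<union> A \<times> B" by auto
  ultimately have "mset_set (insert a A \<times> B) = mset_set (Pair a ` B) + mset_set (A \<times> B)"
    by simp
  also have "mset_set (Pair a ` B) = image_mset (Pair a) (mset_set B)"
    by (simp add: image_mset_mset_set inj_on_def)
  finally show ?case using insert by simp
qed simp

lemma bij_betw_ball_inv_into_iff:
  assumes "bij_betw g A B"
  shows "(\<forall>x\<in>B. \<forall>y\<in>B. P x y \<longrightarrow> Q (inv_into A g x) (inv_into A g y)) \<longleftrightarrow>
         (\<forall>v\<in>A. \<forall>w\<in>A. P (g v) (g w) \<longrightarrow> Q v w)"
proof -
  have "inv_into A g (g v) = v" if "v \<in> A" for v
    using assms that by (simp add: bij_betw_inv_into_left)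
  moreover have "g (inv_into A g x) = x" "inv_into A g x \<in> A" if "x \<in> B" for x
    using assms that by (simp_all add: bij_betw_inv_into_right bij_betw_imp_surj_on inv_into_into)
  moreover have "g v \<in> B" if "v \<in> A" for v
    using assms that by (simp add: bij_betwE)
  ultimately show ?thesis by metis
qed

lemma finite_chain_has_greatest:
  assumes "finite A" "A \<noteq> {}" "trans R"
    and "\<And>x y. x \<in> A \<Longrightarrow> y \<in> A \<Longrightarrow> x = y \<or> (x, y) \<in> R \<or> (y, x) \<in> R"
  shows "\<exists>m\<in>A. \<forall>x\<in>A. x = m \<or> (x, m) \<in> R"
  using assms(1,2,4)
proof (induction A rule: finite_ne_induct)
  case (insert x F)
  then obtain m where m: "m \<in> F" "\<forall>y\<in>F. y = m \<or> (y, m) \<in> R" by auto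
  show ?case
  proof (cases "(m, x) \<in> R")
    case True
    then show ?thesis using m \<open>trans R\<close> by (auto dest: transD)
  next
    case False
    have "x \<noteq> m" using m(1) insert.hyps by blast
    then have "(x, m) \<in> R" using insert.prems[of x m] m(1) False by blast
    then show ?thesis using m by auto
  qed
qed simp

section \<open>Vertices\<close>

lemma Nil_in_vset [simp]: "[] \<in> vset t"
  by (cases t) (simp add: vset_def)

lemma Cons_in_vset [simp]: "i # p \<in> vset (PNode ts) \<longleftrightarrow> i < length ts \<and> p \<in> vset (ts ! i)"
  by (simp add: vset_def)

lemma vset_PNode: "vset (PNode ts) = insert [] (\<Union>i<length ts. Cons i ` vset (ts ! i))"
proof -
  have "x \<in> vset (PNode ts) \<longleftrightarrow> x \<in> insert [] (\<Union>i<length ts. Cons i ` vset (ts ! i))" for x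
    by (cases x) auto
  then show ?thesis by blast
qed

lemma vset_leaf [simp]: "vset (PNode []) = {[]}"
  by (simp add: vset_PNode)

lemma finite_vset [simp]: "finite (vset t)"
  by (induction t) (simp add: vset_PNode)

lemma vset_prefix_closed: "prefix v w \<Longrightarrow> w \<in> vset t \<Longrightarrow> v \<in> vset t"
proof (induction v arbitrary: w t)
  case (Cons i v)
  then show ?case by (cases w; cases t) auto
qed simp

lemma card_strict_prefixes_in_vset:
  assumes "w \<in> vset t"
  shows "card {v \<in> vset t. strict_prefix v w} = length w"
proof -
  have "{v \<in> vset t. strict_prefix v w} = {v. strict_prefix v w}"
    using assms vset_prefix_closed prefix_order.less_imp_le by blast
  moreover have "inj_on (\<lambda>k. take k w) {..<length w}"
    by (rule inj_onI) (metis length_take lessThan_iff min.absorb4)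
  ultimately show ?thesis by (simp add: strict_prefixes_eq_takes card_image)
qed

text \<open>The position of a vertex of \<open>PNode ts\<close> in \<open>t1 \<circ>\<searrow> PNode ts\<close>.\<close>

fun inc_path :: "nat list \<Rightarrow> nat list" where
  "inc_path [] = []"
| "inc_path (i # p) = Suc i # p"

lemma inc_path_eq_iff [simp]: "inc_path w = inc_path w' \<longleftrightarrow> w = w'"
  by (cases w; cases w') auto

lemma inc_path_neq_Cons_0 [simp]: "inc_path q \<noteq> 0 # p" "0 # p \<noteq> inc_path q"
  by (cases q; simp)+

lemma inc_path_eq_Suc_Cons_iff [simp]:
  "inc_path q = Suc k # p \<longleftrightarrow> q = k # p" "Suc k # p = inc_path q \<longleftrightarrow> q = k # p"
  by (cases q; auto)+

lemma strict_prefix_inc_path_iff [simp]: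
  "strict_prefix (inc_path x) (inc_path y) \<longleftrightarrow> strict_prefix x y"
  by (cases x; cases y) auto

lemma strict_prefix_inc_path_Cons_0_iff [simp]: "strict_prefix (inc_path q) (0 # p) \<longleftrightarrow> q = []"
  by (cases q) auto

lemma not_strict_prefix_Cons_0_inc_path [simp]: "\<not> strict_prefix (0 # p) (inc_path q)"
  by (cases q) auto

lemma inc_path_in_vset_iff [simp]: "inc_path x \<in> vset (PNode (t1 # ts)) \<longleftrightarrow> x \<in> vset (PNode ts)"
  by (cases x) auto

lemma vset_PNode_Cons: "vset (PNode (t1 # ts)) = Cons 0 ` vset t1 \<union> inc_path ` vset (PNode ts)"
proof (intro set_eqI iffI)
  fix x assume "x \<in> vset (PNode (t1 # ts))"
  then show "x \<in> Cons 0 ` vset t1 \<union> inc_path ` vset (PNode ts)"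
  proof (cases x)
    case Nil
    then show ?thesis by (metis UnI2 image_eqI inc_path.simps(1) Nil_in_vset)
  next
    case (Cons i p)
    then show ?thesis
      using \<open>x \<in> vset (PNode (t1 # ts))\<close>
      by (cases i) (auto simp: image_iff intro: exI[of _ "(i - 1) # p"])
  qed
qed auto

lemma vset_PNode_Cons_cases:
  assumes "x \<in> vset (PNode (t1 # ts))"
  obtains (first) p where "x = 0 # p" "p \<in> vset t1"
  | (other) q where "x = inc_path q" "q \<in> vset (PNode ts)"
  using assms unfolding vset_PNode_Cons by blast

lemma lll_0_0 [simp]: "lll (PNode (t1 # ts)) (0 # p) (0 # q) = lll t1 p q"
  by simp

lemma lll_0_inc [simp]: "\<not> lll (PNode (t1 # ts)) (0 # p) (inc_path q)"
  by (cases q) auto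

lemma lll_inc_0 [simp]: "lll (PNode (t1 # ts)) (inc_path q) (0 # p)"
  by (cases q) auto

lemma lll_inc_inc [simp]: "lll (PNode (t1 # ts)) (inc_path q) (inc_path q') = lll (PNode ts) q q'"
  by (cases q; cases q') (auto split: nat.splits)

declare lll.simps(2) [simp del]

section \<open>Isomorphisms of planar trees\<close>

definition tree_iso :: "ptree \<Rightarrow> ptree \<Rightarrow> (nat list \<Rightarrow> nat list) \<Rightarrow> bool" where
  "tree_iso s \<sigma> f \<longleftrightarrow> bij_betw f (vset s) (vset \<sigma>) \<and>
     (\<forall>x\<in>vset s. \<forall>y\<in>vset s. strict_prefix x y \<longleftrightarrow> strict_prefix (f x) (f y))"

lemma tree_iso_length:
  assumes f: "tree_iso s \<sigma> f" and w: "w \<in> vset s"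
  shows "length (f w) = length w"
proof -
  \<comment> \<open>the depth of a vertex is the number of its strict predecessors\<close>
  have bij: "bij_betw f (vset s) (vset \<sigma>)"
    and ord: "\<And>x y. x \<in> vset s \<Longrightarrow> y \<in> vset s \<Longrightarrow> strict_prefix x y \<longleftrightarrow> strict_prefix (f x) (f y)"
    using f by (auto simp: tree_iso_def)
  have "f ` {v \<in> vset s. strict_prefix v w} = {u \<in> vset \<sigma>. strict_prefix u (f w)}"
  proof (intro set_eqI iffI)
    fix u assume "u \<in> {u \<in> vset \<sigma>. strict_prefix u (f w)}"
    then have "u \<in> f ` vset s" "strict_prefix u (f w)" using bij by (simp_all add: bij_betw_def)
    then obtain v where "v \<in> vset s" "u = f v" "strict_prefix (f v) (f w)" by blast
    then show "u \<in> f ` {v \<in> vset s. strict_prefix v w}" using ord[of v w] w by blast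
  next
    fix u assume "u \<in> f ` {v \<in> vset s. strict_prefix v w}"
    then obtain v where "v \<in> vset s" "strict_prefix v w" "u = f v" by blast
    then show "u \<in> {u \<in> vset \<sigma>. strict_prefix u (f w)}" using bij_betwE[OF bij] ord[of v w] w by blast
  qed
  then have "bij_betw f {v \<in> vset s. strict_prefix v w} {u \<in> vset \<sigma>. strict_prefix u (f w)}"
    by (rule bij_betw_subset[OF bij, rotated]) auto
  then have "card {v \<in> vset s. strict_prefix v w} = card {u \<in> vset \<sigma>. strict_prefix u (f w)}"
    by (rule bij_betw_same_card)
  moreover have "f w \<in> vset \<sigma>" using bij w by (simp add: bij_betwE)
  ultimately show ?thesis using w by (simp add: card_strict_prefixes_in_vset)
qed

lemma tree_iso_singleton:
  assumes f: "tree_iso (PNode ts) (PNode us) f" and "i < length ts"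
  shows "f [i] = [hd (f [i])]"
proof -
  have "[i] \<in> vset (PNode ts)" using assms(2) by simp
  then have "length (f [i]) = 1" using tree_iso_length[OF f] by simp
  then show ?thesis by (cases "f [i]") auto
qed

lemma tree_iso_Cons:
  assumes f: "tree_iso (PNode ts) (PNode us) f" and "i < length ts" "p \<in> vset (ts ! i)"
  shows "f (i # p) = hd (f [i]) # tl (f (i # p))"
    and "hd (f [i]) < length us" and "tl (f (i # p)) \<in> vset (us ! hd (f [i]))"
proof -
  have i: "[i] \<in> vset (PNode ts)" and ip: "i # p \<in> vset (PNode ts)" using assms(2,3) by auto
  have "prefix (f [i]) (f (i # p))"
  proof (cases "p = []")
    case False
    then have "strict_prefix [i] (i # p)" by (simp add: strict_prefix_def)
    then have "strict_prefix (f [i]) (f (i # p))" using f i ip unfolding tree_iso_def by blast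
    then show ?thesis by (rule prefix_order.less_imp_le)
  qed simp
  then show eq: "f (i # p) = hd (f [i]) # tl (f (i # p))"
    using tree_iso_singleton[OF f assms(2)]
    by (metis append_Cons hd_Cons_tl hd_append2 list.distinct(1) prefixE)
  have "bij_betw f (vset (PNode ts)) (vset (PNode us))" using f by (simp add: tree_iso_def)
  then have "f (i # p) \<in> vset (PNode us)" using ip bij_betwE by blast
  then have "hd (f [i]) # tl (f (i # p)) \<in> vset (PNode us)" by (subst (asm) eq)
  then show "hd (f [i]) < length us" "tl (f (i # p)) \<in> vset (us ! hd (f [i]))" by simp_all
qed

lemma tree_iso_Cons_preimage:
  assumes f: "tree_iso (PNode ts) (PNode us) f" and jq: "j # q \<in> vset (PNode us)"
  obtains i p where "i < length ts" "p \<in> vset (ts ! i)" "f (i # p) = j # q"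
proof -
  have "j # q \<in> f ` vset (PNode ts)" using f jq by (simp add: tree_iso_def bij_betw_def)
  then obtain x where x: "j # q = f x" "x \<in> vset (PNode ts)" by (rule imageE)
  have "x \<noteq> []" using tree_iso_length[OF f x(2)] x(1) by auto
  then show thesis using that x by (cases x) auto
qed

lemma tree_iso_inj:
  assumes "tree_iso s \<sigma> f" "x \<in> vset s" "y \<in> vset s"
  shows "f x = f y \<longleftrightarrow> x = y"
  using assms by (auto simp: tree_iso_def bij_betw_def inj_on_def)

lemma tree_iso_children:
  assumes f: "tree_iso (PNode ts) (PNode us) f"
  shows "bij_betw (\<lambda>i. hd (f [i])) {..<length ts} {..<length us}"
proof (rule bij_betw_imageI)
  show "inj_on (\<lambda>i. hd (f [i])) {..<length ts}"
  proof (rule inj_onI)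
    fix i k assume ik: "i \<in> {..<length ts}" "k \<in> {..<length ts}" and "hd (f [i]) = hd (f [k])"
    then have "f [i] = f [k]" using tree_iso_singleton[OF f, of i] tree_iso_singleton[OF f, of k] by simp
    then show "i = k" using tree_iso_inj[OF f, of "[i]" "[k]"] ik by simp
  qed
  show "(\<lambda>i. hd (f [i])) ` {..<length ts} = {..<length us}"
  proof (intro set_eqI iffI)
    fix j assume "j \<in> {..<length us}"
    then obtain i p where "i < length ts" "p \<in> vset (ts ! i)" "f (i # p) = [j]"
      using tree_iso_Cons_preimage[OF f, of j "[]"] by auto
    then show "j \<in> (\<lambda>i. hd (f [i])) ` {..<length ts}"
      using tree_iso_Cons(1)[OF f] by force
  qed (use tree_iso_Cons(2)[OF f _ Nil_in_vset] in auto)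
qed

lemma tree_iso_subtree:
  assumes f: "tree_iso (PNode ts) (PNode us) f" and i: "i < length ts"
  shows "tree_iso (ts ! i) (us ! hd (f [i])) (\<lambda>p. tl (f (i # p)))"
  unfolding tree_iso_def
proof (intro conjI ballI bij_betw_imageI)
  show "inj_on (\<lambda>p. tl (f (i # p))) (vset (ts ! i))"
  proof (rule inj_onI)
    fix p q assume p: "p \<in> vset (ts ! i)" and q: "q \<in> vset (ts ! i)"
      and "tl (f (i # p)) = tl (f (i # q))"
    then have "f (i # p) = f (i # q)" using tree_iso_Cons(1)[OF f i] by metis
    then show "p = q" using tree_iso_inj[OF f, of "i # p" "i # q"] i p q by simp
  qed
  show "(\<lambda>p. tl (f (i # p))) ` vset (ts ! i) = vset (us ! hd (f [i]))"
  proof (intro set_eqI iffI)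
    fix q assume q: "q \<in> vset (us ! hd (f [i]))"
    then have "hd (f [i]) # q \<in> vset (PNode us)" using tree_iso_Cons(2)[OF f i Nil_in_vset] by simp
    then obtain k p where k: "k < length ts" "p \<in> vset (ts ! k)" "f (k # p) = hd (f [i]) # q"
      by (rule tree_iso_Cons_preimage[OF f])
    then have "k = i"
      using tree_iso_Cons(1)[OF f k(1,2)] i bij_betw_imp_inj_on[OF tree_iso_children[OF f]]
      by (auto simp: inj_on_def)
    then show "q \<in> (\<lambda>p. tl (f (i # p))) ` vset (ts ! i)" using k by force
  qed (use tree_iso_Cons(3)[OF f i] in auto)
  show "strict_prefix p q \<longleftrightarrow> strict_prefix (tl (f (i # p))) (tl (f (i # q)))"
    if "p \<in> vset (ts ! i)" "q \<in> vset (ts ! i)" for p q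
  proof -
    have "i # p \<in> vset (PNode ts)" "i # q \<in> vset (PNode ts)" using i that by simp_all
    then have "strict_prefix (i # p) (i # q) \<longleftrightarrow> strict_prefix (f (i # p)) (f (i # q))"
      using f unfolding tree_iso_def by blast
    then show ?thesis
      using tree_iso_Cons(1)[OF f i that(1)] tree_iso_Cons(1)[OF f i that(2)] by (metis strict_prefix_simps(3))
  qed
qed

lemma tree_iso_PNode:
  assumes \<pi>: "bij_betw \<pi> {..<length ts} {..<length us}"
    and G: "\<And>i. i < length ts \<Longrightarrow> tree_iso (ts ! i) (us ! \<pi> i) (G i)"
  shows "tree_iso (PNode ts) (PNode us) (\<lambda>x. case x of [] \<Rightarrow> [] | i # p \<Rightarrow> \<pi> i # G i p)"
    (is "tree_iso _ _ ?f")
proof -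
  have \<pi>_inj: "\<pi> i = \<pi> k \<longleftrightarrow> i = k" if "i < length ts" "k < length ts" for i k
    using \<pi> that by (auto simp: bij_betw_def inj_on_def)
  have G_bij: "bij_betw (G i) (vset (ts ! i)) (vset (us ! \<pi> i))" if "i < length ts" for i
    using G[OF that] by (simp add: tree_iso_def)
  have G_ord: "strict_prefix p q \<longleftrightarrow> strict_prefix (G i p) (G i q)"
    if "i < length ts" "p \<in> vset (ts ! i)" "q \<in> vset (ts ! i)" for i p q
    using G[OF that(1)] that by (simp add: tree_iso_def)
  have "inj_on ?f (vset (PNode ts))"
  proof (rule inj_onI)
    fix x y assume x: "x \<in> vset (PNode ts)" and y: "y \<in> vset (PNode ts)" and eq: "?f x = ?f y"
    show "x = y"
    proof (cases x; cases y)
      fix i p k q assume "x = i # p" "y = k # q"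
      then show "x = y" using x y eq \<pi>_inj G_bij by (auto simp: bij_betw_def inj_on_def)
    qed (use eq in auto)
  qed
  moreover have "?f ` vset (PNode ts) = vset (PNode us)"
  proof -
    have "?f ` vset (PNode ts) = insert [] (\<Union>i<length ts. Cons (\<pi> i) ` G i ` vset (ts ! i))"
      by (simp add: vset_PNode image_UN image_image)
    also have "\<dots> = insert [] (\<Union>i<length ts. Cons (\<pi> i) ` vset (us ! \<pi> i))"
      using G_bij by (simp add: bij_betw_def)
    also have "\<dots> = insert [] (\<Union>j\<in>\<pi> ` {..<length ts}. Cons j ` vset (us ! j))"
      by simp
    also have "\<dots> = vset (PNode us)"
      using \<pi> by (simp add: vset_PNode bij_betw_def)
    finally show ?thesis .
  qed
  moreover have "strict_prefix x y \<longleftrightarrow> strict_prefix (?f x) (?f y)"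
    if "x \<in> vset (PNode ts)" "y \<in> vset (PNode ts)" for x y
  proof (cases x; cases y)
    fix i p k q assume "x = i # p" "y = k # q"
    then show ?thesis using that \<pi>_inj G_ord by (cases "i = k") auto
  qed auto
  ultimately show ?thesis by (simp add: tree_iso_def bij_betw_def)
qed

lemma forget_eq_imp_tree_iso: "forget s = forget \<sigma> \<Longrightarrow> \<exists>f. tree_iso s \<sigma> f"
proof (induction s arbitrary: \<sigma>)
  case (PNode ts)
  obtain us where \<sigma>: "\<sigma> = PNode us" by (cases \<sigma>)
  have "mset (map forget ts) = mset (map forget us)" using PNode.prems \<sigma> by simp
  from permutation_Ex_bij[OF this] obtain \<pi> where \<pi>: "bij_betw \<pi> {..<length ts} {..<length us}"
    and nth: "\<forall>i<length ts. map forget ts ! i = map forget us ! \<pi> i"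
    by auto
  have "\<exists>g. tree_iso (ts ! i) (us ! \<pi> i) g" if i: "i < length ts" for i
  proof -
    have "\<pi> i < length us" using \<pi> i by (auto simp: bij_betw_def)
    then have "forget (ts ! i) = forget (us ! \<pi> i)" using nth i by simp
    then show ?thesis using PNode.IH i by simp
  qed
  then obtain G where "\<And>i. i < length ts \<Longrightarrow> tree_iso (ts ! i) (us ! \<pi> i) (G i)" by metis
  with \<pi> show ?case unfolding \<sigma> by (blast intro: tree_iso_PNode)
qed

lemma tree_iso_imp_forget_eq: "tree_iso s \<sigma> f \<Longrightarrow> forget s = forget \<sigma>"
proof (induction s arbitrary: \<sigma> f)
  case (PNode ts)
  obtain us where \<sigma>: "\<sigma> = PNode us" by (cases \<sigma>)
  define \<pi> where "\<pi> i = hd (f [i])" for i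
  have \<pi>: "bij_betw \<pi> {..<length ts} {..<length us}"
    using tree_iso_children PNode.prems unfolding \<sigma> \<pi>_def by blast
  have sub: "tree_iso (ts ! i) (us ! \<pi> i) (\<lambda>p. tl (f (i # p)))" if "i < length ts" for i
    using tree_iso_subtree PNode.prems that unfolding \<sigma> \<pi>_def by blast
  have "\<forall>i<length (map forget ts). map forget ts ! i = map forget us ! \<pi> i"
  proof (intro allI impI)
    fix i assume "i < length (map forget ts)"
    then have i: "i < length ts" by simp
    then have "\<pi> i < length us" using \<pi> by (auto simp: bij_betw_def)
    then show "map forget ts ! i = map forget us ! \<pi> i" using PNode.IH[OF _ sub[OF i]] i by simp
  qed
  then have "mset (map forget ts) = mset (map forget us)"
    using mset_eq_if_bij_betw_nth[of \<pi> "map forget ts" "map forget us"] \<pi> by simp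
  then show ?case using \<sigma> by simp
qed

lemma forget_eq_iff_tree_iso: "forget s = forget \<sigma> \<longleftrightarrow> (\<exists>f. tree_iso s \<sigma> f)"
  using forget_eq_imp_tree_iso tree_iso_imp_forget_eq by blast

section \<open>Forest orders and admissible orders\<close>

definition forest_order :: "'a set \<Rightarrow> 'a rel \<Rightarrow> bool" where
  "forest_order A R \<longleftrightarrow> R \<subseteq> A \<times> A \<and> trans R \<and> irrefl R \<and>
     (\<forall>x y z. (x, z) \<in> R \<longrightarrow> (y, z) \<in> R \<longrightarrow> x = y \<or> (x, y) \<in> R \<or> (y, x) \<in> R)"

lemma forest_order_pullback:
  assumes "forest_order B R" and "\<And>x. g x \<in> B \<longleftrightarrow> x \<in> A" and "inj g"
  shows "forest_order A {(x, y). (g x, g y) \<in> R}"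
  using assms unfolding forest_order_def trans_def irrefl_def inj_def by blast

definition pullback_order :: "'a set \<Rightarrow> ('a \<Rightarrow> 'b list) \<Rightarrow> 'a rel" where
  "pullback_order A \<psi> = {(x, y). x \<in> A \<and> y \<in> A \<and> strict_prefix (\<psi> x) (\<psi> y)}"

lemma forest_order_pullback_order:
  assumes "inj_on \<psi> A"
  shows "forest_order A (pullback_order A \<psi>)"
  unfolding forest_order_def
proof (intro conjI allI impI)
  fix x y z assume "(x, z) \<in> pullback_order A \<psi>" "(y, z) \<in> pullback_order A \<psi>"
  then have "x \<in> A" "y \<in> A" "prefix (\<psi> x) (\<psi> z)" "prefix (\<psi> y) (\<psi> z)"
    by (auto simp: pullback_order_def)
  then have "prefix (\<psi> x) (\<psi> y) \<or> prefix (\<psi> y) (\<psi> x)" "\<psi> x = \<psi> y \<Longrightarrow> x = y"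
    using prefix_same_cases assms by (blast, simp add: inj_on_def)
  then show "x = y \<or> (x, y) \<in> pullback_order A \<psi> \<or> (y, x) \<in> pullback_order A \<psi>"
    using \<open>x \<in> A\<close> \<open>y \<in> A\<close> by (auto simp: pullback_order_def prefix_order.le_less)
qed (auto simp: pullback_order_def trans_def irrefl_def dest: prefix_order.less_trans)

definition admissible_orders :: "ptree \<Rightarrow> nat list rel set" where
  "admissible_orders \<tau> = {R. forest_order (vset \<tau>) R
      \<and> (\<forall>x\<in>vset \<tau>. \<forall>y\<in>vset \<tau>. strict_prefix x y \<longrightarrow> (x, y) \<in> R)
      \<and> (\<forall>(x, y)\<in>R. lll \<tau> x y)}"

lemma finite_admissible_orders: "finite (admissible_orders \<tau>)"
proof (rule finite_subset)
  show "admissible_orders \<tau> \<subseteq> Pow (vset \<tau> \<times> vset \<tau>)"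
    by (auto simp: admissible_orders_def forest_order_def)
qed simp

lemma admissible_orders_leaf: "admissible_orders (PNode []) = {{}}"
  by (auto simp: admissible_orders_def forest_order_def irrefl_def trans_def)

lemma pullback_order_admissible:
  assumes \<psi>: "inj_on \<psi> (vset \<tau>)"
    and up: "\<forall>x\<in>vset \<tau>. \<forall>y\<in>vset \<tau>. strict_prefix x y \<longrightarrow> strict_prefix (\<psi> x) (\<psi> y)"
    and lo: "\<forall>x\<in>vset \<tau>. \<forall>y\<in>vset \<tau>. strict_prefix (\<psi> x) (\<psi> y) \<longrightarrow> lll \<tau> x y"
  shows "pullback_order (vset \<tau>) \<psi> \<in> admissible_orders \<tau>"
  using forest_order_pullback_order[OF \<psi>] up lo
  by (auto simp: admissible_orders_def pullback_order_def)

section \<open>Admissible orders of a grafted tree\<close>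

text \<open>The order on the vertices of \<open>t1 \<circ>\<searrow> PNode ts\<close> that places \<open>(vset t1, R1)\<close>
  directly above the vertex \<open>p0\<close> of \<open>(vset (PNode ts), R2)\<close>.\<close>

definition graft_order :: "ptree \<Rightarrow> nat list rel \<Rightarrow> nat list rel \<Rightarrow> nat list \<Rightarrow> nat list rel" where
  "graft_order t1 R1 R2 p0 = {(0 # x, 0 # y) | x y. (x, y) \<in> R1}
     \<union> {(inc_path x, inc_path y) | x y. (x, y) \<in> R2}
     \<union> {(inc_path x, 0 # y) | x y. y \<in> vset t1 \<and> (x = p0 \<or> (x, p0) \<in> R2)}"

lemma graft_order_0_0 [simp]: "(0 # x, 0 # y) \<in> graft_order t1 R1 R2 p0 \<longleftrightarrow> (x, y) \<in> R1"
  by (auto simp: graft_order_def)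

lemma graft_order_inc_inc [simp]:
  "(inc_path x, inc_path y) \<in> graft_order t1 R1 R2 p0 \<longleftrightarrow> (x, y) \<in> R2"
  by (auto simp: graft_order_def)

lemma graft_order_inc_0 [simp]:
  "(inc_path x, 0 # y) \<in> graft_order t1 R1 R2 p0 \<longleftrightarrow> y \<in> vset t1 \<and> (x = p0 \<or> (x, p0) \<in> R2)"
  by (auto simp: graft_order_def)

lemma graft_order_0_inc [simp]: "(0 # x, inc_path y) \<notin> graft_order t1 R1 R2 p0"
  by (auto simp: graft_order_def)

lemma graft_order_cases:
  assumes "(u, w) \<in> graft_order t1 R1 R2 p0"
  obtains x y where "u = 0 # x" "w = 0 # y" "(x, y) \<in> R1"
  | x y where "u = inc_path x" "w = inc_path y" "(x, y) \<in> R2"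
  | x y where "u = inc_path x" "w = 0 # y" "y \<in> vset t1" "x = p0 \<or> (x, p0) \<in> R2"
  using assms unfolding graft_order_def by blast

lemma forest_order_graft_order:
  assumes R1: "forest_order (vset t1) R1" and R2: "forest_order (vset (PNode ts)) R2"
    and p0: "p0 \<in> vset (PNode ts)"
  shows "forest_order (vset (PNode (t1 # ts))) (graft_order t1 R1 R2 p0)"
proof -
  let ?R = "graft_order t1 R1 R2 p0"
  note F1 = R1[unfolded forest_order_def] and F2 = R2[unfolded forest_order_def]
  have "?R \<subseteq> vset (PNode (t1 # ts)) \<times> vset (PNode (t1 # ts))"
  proof (clarify)
    fix u w assume "(u, w) \<in> ?R"
    then show "u \<in> vset (PNode (t1 # ts)) \<and> w \<in> vset (PNode (t1 # ts))"
      by (cases rule: graft_order_cases) (use F1 F2 p0 in auto)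
  qed
  moreover have "trans ?R"
  proof (rule transI)
    fix u v w assume uv: "(u, v) \<in> ?R" and vw: "(v, w) \<in> ?R"
    from uv vw show "(u, w) \<in> ?R"
      by (elim graft_order_cases) (use F1 F2 in \<open>auto dest: transD\<close>)
  qed
  moreover have "irrefl ?R"
    using F1 F2 by (auto simp: irrefl_def elim: graft_order_cases)
  moreover have "u = v \<or> (u, v) \<in> ?R \<or> (v, u) \<in> ?R"
    if uw: "(u, w) \<in> ?R" and vw: "(v, w) \<in> ?R" for u v w
  proof -
    have ch1: "x = y \<or> (x, y) \<in> R1 \<or> (y, x) \<in> R1" if "(x, z) \<in> R1" "(y, z) \<in> R1" for x y z
      using F1 that by blast
    have ch2: "x = y \<or> (x, y) \<in> R2 \<or> (y, x) \<in> R2" if "(x, z) \<in> R2" "(y, z) \<in> R2" for x y z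
      using F2 that by blast
    from uw show ?thesis
    proof (cases rule: graft_order_cases)
      case (1 x y)
      from vw show ?thesis by (cases rule: graft_order_cases) (use 1 ch1 F1 in auto)
    next
      case (2 x y)
      from vw show ?thesis by (cases rule: graft_order_cases) (use 2 ch2 in auto)
    next
      case (3 x y)
      have "R1 \<subseteq> vset t1 \<times> vset t1" using F1 by blast
      with vw show ?thesis by (cases rule: graft_order_cases) (use 3 ch2 in auto)
    qed
  qed
  ultimately show ?thesis unfolding forest_order_def by blast
qed

lemma graft_order_admissible:
  assumes R1: "R1 \<in> admissible_orders t1" and R2: "R2 \<in> admissible_orders (PNode ts)"
    and p0: "p0 \<in> vset (PNode ts)"
  shows "graft_order t1 R1 R2 p0 \<in> admissible_orders (PNode (t1 # ts))"
proof -
  let ?R = "graft_order t1 R1 R2 p0"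
  note A1 = R1[unfolded admissible_orders_def, simplified]
  note A2 = R2[unfolded admissible_orders_def, simplified]
  have "forest_order (vset (PNode (t1 # ts))) ?R"
    using A1 A2 p0 by (blast intro: forest_order_graft_order)
  moreover have "(x, y) \<in> ?R"
    if "x \<in> vset (PNode (t1 # ts))" "y \<in> vset (PNode (t1 # ts))" "strict_prefix x y" for x y
  proof -
    have "[] = p0 \<or> ([], p0) \<in> R2"
      using A2 p0 by (cases p0) (auto simp: strict_prefix_def)
    then show ?thesis
      using that A1 A2 graft_order_inc_0[of "[]"] unfolding vset_PNode_Cons by auto
  qed
  moreover have "lll (PNode (t1 # ts)) x y" if "(x, y) \<in> ?R" for x y
    using that A1 A2 by (cases rule: graft_order_cases) auto
  ultimately show ?thesis unfolding admissible_orders_def by blast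
qed

lemma graft_order_inject:
  assumes "trans R2" "irrefl R2"
    and eq: "graft_order t1 R1 R2 p = graft_order t1 R1' R2' p'"
  shows "R1 = R1' \<and> R2 = R2' \<and> p = p'"
proof (intro conjI)
  show "R1 = R1'"
  proof (intro set_eqI)
    fix z show "z \<in> R1 \<longleftrightarrow> z \<in> R1'"
      using graft_order_0_0[of "fst z" "snd z" t1 R1 R2 p] graft_order_0_0[of "fst z" "snd z" t1 R1' R2' p']
      by (simp add: eq)
  qed
  show R2: "R2 = R2'"
  proof (intro set_eqI)
    fix z show "z \<in> R2 \<longleftrightarrow> z \<in> R2'"
      using graft_order_inc_inc[of "fst z" "snd z" t1 R1 R2 p]
        graft_order_inc_inc[of "fst z" "snd z" t1 R1' R2' p']
      by (simp add: eq)
  qed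
  have "(inc_path p, [0]) \<in> graft_order t1 R1' R2' p'" "(inc_path p', [0]) \<in> graft_order t1 R1 R2 p"
    using eq by (metis Nil_in_vset graft_order_inc_0)+
  then have "p = p' \<or> (p, p') \<in> R2" "p' = p \<or> (p', p) \<in> R2" using R2 by auto
  then show "p = p'" using assms(1,2) by (auto simp: irrefl_def dest: transD)
qed

lemma admissible_order_first_branch:
  assumes "R \<in> admissible_orders (PNode (t1 # ts))"
  shows "{(x, y). (0 # x, 0 # y) \<in> R} \<in> admissible_orders t1"
proof -
  have "forest_order (vset t1) {(x, y). (0 # x, 0 # y) \<in> R}"
    using assms by (intro forest_order_pullback) (auto simp: admissible_orders_def inj_def)
  then show ?thesis using assms by (auto simp: admissible_orders_def)
qed

lemma admissible_order_other_branches: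
  assumes "R \<in> admissible_orders (PNode (t1 # ts))"
  shows "{(x, y). (inc_path x, inc_path y) \<in> R} \<in> admissible_orders (PNode ts)"
proof -
  have "forest_order (vset (PNode ts)) {(x, y). (inc_path x, inc_path y) \<in> R}"
    using assms by (intro forest_order_pullback) (auto simp: admissible_orders_def inj_def)
  then show ?thesis using assms by (auto simp: admissible_orders_def)
qed

lemma admissible_order_below_first_branch:
  assumes R: "R \<in> admissible_orders (PNode (t1 # ts))" and y: "y \<in> vset t1"
  shows "(inc_path x, 0 # y) \<in> R \<longleftrightarrow> (inc_path x, [0]) \<in> R"
proof (cases "y = []")
  case False
  \<comment> \<open>the predecessors of \<open>0 # y\<close> form a chain containing \<open>[0]\<close>, and \<open>[0]\<close> cannot precede
    \<open>inc_path x\<close>\<close>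
  have F: "forest_order (vset (PNode (t1 # ts))) R"
    and lll: "\<And>u w. (u, w) \<in> R \<Longrightarrow> lll (PNode (t1 # ts)) u w"
    using R by (auto simp: admissible_orders_def)
  have "([0], 0 # y) \<in> R"
    using R y False by (auto simp: admissible_orders_def strict_prefix_def)
  moreover have "([0], inc_path x) \<notin> R" using lll lll_0_inc by blast
  ultimately show ?thesis
    using F unfolding forest_order_def by (metis inc_path_neq_Cons_0(1) transD)
qed simp

lemma admissible_order_eq_graft_order:
  assumes R: "R \<in> admissible_orders (PNode (t1 # ts))" and p0: "p0 \<in> vset (PNode ts)"
    and below_root: "\<And>x. x \<in> vset (PNode ts) \<Longrightarrow>
      (inc_path x, [0]) \<in> R \<longleftrightarrow> x = p0 \<or> (inc_path x, inc_path p0) \<in> R"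
  shows "R = graft_order t1 {(x, y). (0 # x, 0 # y) \<in> R} {(x, y). (inc_path x, inc_path y) \<in> R} p0"
    (is "R = ?G")
proof (intro set_eqI)
  fix z
  have "R \<subseteq> vset (PNode (t1 # ts)) \<times> vset (PNode (t1 # ts))"
    using R by (simp add: admissible_orders_def forest_order_def)
  moreover have "?G \<subseteq> vset (PNode (t1 # ts)) \<times> vset (PNode (t1 # ts))"
    using calculation p0 by (auto elim!: graft_order_cases)
  moreover have "(u, w) \<in> R \<longleftrightarrow> (u, w) \<in> ?G"
    if u: "u \<in> vset (PNode (t1 # ts))" and w: "w \<in> vset (PNode (t1 # ts))" for u w
    using u
  proof (cases rule: vset_PNode_Cons_cases)
    case (first a)
    from w show ?thesis
    proof (cases rule: vset_PNode_Cons_cases)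
      case (other b)
      have "(u, w) \<notin> R" using R first other by (auto simp: admissible_orders_def)
      then show ?thesis using first other by simp
    qed (use first in simp)
  next
    case (other a)
    from w show ?thesis
    proof (cases rule: vset_PNode_Cons_cases)
      case (first b)
      then show ?thesis
        using other admissible_order_below_first_branch[OF R first(2)] below_root[OF other(2)]
        by simp
    qed (use other in simp)
  qed
  ultimately show "z \<in> R \<longleftrightarrow> z \<in> ?G" by (cases z) blast
qed

lemma admissible_orders_decomp:
  assumes R: "R \<in> admissible_orders (PNode (t1 # ts))"
  obtains R1 R2 p0 where "R1 \<in> admissible_orders t1" "R2 \<in> admissible_orders (PNode ts)"
    "p0 \<in> vset (PNode ts)" "R = graft_order t1 R1 R2 p0"
proof -
  define R2 where "R2 = {(x, y). (inc_path x, inc_path y) \<in> R}"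
  define P where "P = {x \<in> vset (PNode ts). (inc_path x, [0]) \<in> R}"
  have F: "forest_order (vset (PNode (t1 # ts))) R"
    using R by (auto simp: admissible_orders_def)
  have R2: "R2 \<in> admissible_orders (PNode ts)"
    unfolding R2_def using R by (rule admissible_order_other_branches)
  have "[] \<in> P"
    using R by (auto simp: P_def admissible_orders_def)
  moreover have "x = y \<or> (x, y) \<in> R2 \<or> (y, x) \<in> R2" if "x \<in> P" "y \<in> P" for x y
    using F that unfolding forest_order_def P_def R2_def
    by (metis (lifting) inc_path_eq_iff mem_Collect_eq case_prod_conv)
  moreover have "trans R2" using R2 by (simp add: admissible_orders_def forest_order_def)
  ultimately obtain p0 where p0: "p0 \<in> P" and greatest: "\<forall>x\<in>P. x = p0 \<or> (x, p0) \<in> R2"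
    using finite_chain_has_greatest[of P R2] by (force simp: P_def)
  have "(inc_path x, [0]) \<in> R \<longleftrightarrow> x = p0 \<or> (inc_path x, inc_path p0) \<in> R"
    if "x \<in> vset (PNode ts)" for x
    using greatest p0 F that unfolding P_def R2_def forest_order_def by (auto dest: transD)
  moreover have "p0 \<in> vset (PNode ts)" using p0 by (simp add: P_def)
  ultimately have "R = graft_order t1 {(x, y). (0 # x, 0 # y) \<in> R} R2 p0"
    unfolding R2_def using admissible_order_eq_graft_order[OF R] by blast
  then show thesis
    using that admissible_order_first_branch[OF R] R2 \<open>p0 \<in> vset (PNode ts)\<close> by blast
qed

lemma bij_betw_graft_order:
  "bij_betw (\<lambda>(R1, R2, p). graft_order t1 R1 R2 p)
     (admissible_orders t1 \<times> admissible_orders (PNode ts) \<times> vset (PNode ts))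
     (admissible_orders (PNode (t1 # ts)))"
proof (rule bij_betw_imageI)
  show "inj_on (\<lambda>(R1, R2, p). graft_order t1 R1 R2 p)
     (admissible_orders t1 \<times> admissible_orders (PNode ts) \<times> vset (PNode ts))"
  proof (rule inj_onI)
    fix x y
    assume x: "x \<in> admissible_orders t1 \<times> admissible_orders (PNode ts) \<times> vset (PNode ts)"
      and eq: "(\<lambda>(R1, R2, p). graft_order t1 R1 R2 p) x = (\<lambda>(R1, R2, p). graft_order t1 R1 R2 p) y"
    obtain R1 R2 p R1' R2' p' where xy: "x = (R1, R2, p)" "y = (R1', R2', p')"
      by (cases x, cases y) auto
    have "trans R2" "irrefl R2"
      using x xy by (simp_all add: admissible_orders_def forest_order_def)
    then show "x = y" using graft_order_inject eq xy by simp
  qed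
  show "(\<lambda>(R1, R2, p). graft_order t1 R1 R2 p) `
      (admissible_orders t1 \<times> admissible_orders (PNode ts) \<times> vset (PNode ts))
    = admissible_orders (PNode (t1 # ts))"
  proof (intro subset_antisym subsetI)
    fix R assume "R \<in> admissible_orders (PNode (t1 # ts))"
    then obtain R1 R2 p0 where "R1 \<in> admissible_orders t1" "R2 \<in> admissible_orders (PNode ts)"
      "p0 \<in> vset (PNode ts)" "R = graft_order t1 R1 R2 p0"
      by (rule admissible_orders_decomp)
    then show "R \<in> (\<lambda>(R1, R2, p). graft_order t1 R1 R2 p) `
      (admissible_orders t1 \<times> admissible_orders (PNode ts) \<times> vset (PNode ts))"
      by (intro image_eqI[where x = "(R1, R2, p0)"]) simp_all
  qed (auto intro: graft_order_admissible)
qed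

section \<open>Following the vertices through \<open>Psi\<close>\<close>

text \<open>The position of a vertex of \<open>b\<close> in \<open>graft_at a v b\<close>: the children of \<open>v\<close> move one place
  to the right.\<close>

fun graft_shift :: "nat list \<Rightarrow> nat list \<Rightarrow> nat list" where
  "graft_shift [] w = inc_path w"
| "graft_shift (j # v) [] = []"
| "graft_shift (j # v) (i # r) = (if i = j then i # graft_shift v r else i # r)"

lemma graft_shift_eq_iff [simp]: "graft_shift v w = graft_shift v w' \<longleftrightarrow> w = w'"
proof (induction v arbitrary: w w')
  case (Cons j v)
  then show ?case by (cases w; cases w') auto
qed simp

lemma graft_shift_neq_grafted [simp]: "graft_shift v w \<noteq> v @ 0 # p" "v @ 0 # p \<noteq> graft_shift v w"
proof (induction v arbitrary: w)
  case (Cons j v)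
  case 1 show ?case using Cons by (cases w) auto
  case 2 show ?case using Cons by (cases w) auto
qed simp_all

lemma strict_prefix_graft_shift_iff [simp]:
  "strict_prefix (graft_shift v w) (graft_shift v w') \<longleftrightarrow> strict_prefix w w'"
proof (induction v arbitrary: w w')
  case (Cons j v)
  then show ?case by (cases w; cases w') auto
qed simp

lemma strict_prefix_graft_shift_grafted_iff [simp]:
  "strict_prefix (graft_shift v w) (v @ 0 # p) \<longleftrightarrow> prefix w v"
proof (induction v arbitrary: w)
  case Nil
  then show ?case by (cases w) auto
next
  case (Cons j v)
  then show ?case by (cases w) auto
qed

lemma not_strict_prefix_grafted_graft_shift [simp]: "\<not> strict_prefix (v @ 0 # p) (graft_shift v w)"
proof (induction v arbitrary: w)
  case Nil
  then show ?case by (cases w) auto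
next
  case (Cons j v)
  then show ?case by (cases w) auto
qed

lemma Cons_in_graft_shift_image_iff:
  "i # r \<in> graft_shift (j # v) ` vset (PNode ts) \<longleftrightarrow>
     i < length ts \<and> (if i = j then r \<in> graft_shift v ` vset (ts ! i) else r \<in> vset (ts ! i))"
proof
  assume "i # r \<in> graft_shift (j # v) ` vset (PNode ts)"
  then obtain y where "i # r = graft_shift (j # v) y" "y \<in> vset (PNode ts)" by (rule imageE)
  then show "i < length ts \<and> (if i = j then r \<in> graft_shift v ` vset (ts ! i) else r \<in> vset (ts ! i))"
    by (cases y) (auto split: if_splits)
next
  assume A: "i < length ts \<and> (if i = j then r \<in> graft_shift v ` vset (ts ! i) else r \<in> vset (ts ! i))"
  show "i # r \<in> graft_shift (j # v) ` vset (PNode ts)"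
  proof (cases "i = j")
    case True
    then obtain r' where "r' \<in> vset (ts ! i)" "r = graft_shift v r'" using A by auto
    then show ?thesis using A True by (intro image_eqI[where x = "i # r'"]) auto
  next
    case False
    then show ?thesis using A by (intro image_eqI[where x = "i # r"]) auto
  qed
qed

lemma vset_graft_at:
  "v \<in> vset b \<Longrightarrow> vset (graft_at a v b) = (\<lambda>p. v @ 0 # p) ` vset a \<union> graft_shift v ` vset b"
proof (induction v arbitrary: b)
  case Nil
  obtain ts where "b = PNode ts" by (cases b)
  then show ?case using vset_PNode_Cons[of a ts] by (simp add: image_image)
next
  case (Cons j v)
  obtain ts where b: "b = PNode ts" by (cases b)
  have j: "j < length ts" and v: "v \<in> vset (ts ! j)" using Cons.prems b by auto
  have "x \<in> vset (graft_at a (j # v) b) \<longleftrightarrow>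
      x \<in> (\<lambda>p. (j # v) @ 0 # p) ` vset a \<union> graft_shift (j # v) ` vset b" for x
  proof (cases x)
    case Nil
    then show ?thesis using b by (auto intro: image_eqI[where x = "[]"])
  next
    case (Cons i r)
    then show ?thesis
      using b j Cons.IH[OF v] by (auto simp: Cons_in_graft_shift_image_iff)
  qed
  then show ?case by blast
qed

text \<open>Given vertex maps \<open>\<alpha>\<close> of \<open>t1\<close> onto \<open>a\<close> and \<open>\<beta>\<close> of \<open>PNode ts\<close> onto \<open>b\<close>, the vertex map of
  \<open>t1 \<circ>\<searrow> PNode ts\<close> onto \<open>graft_at a v b\<close>.\<close>

fun graft_vmap :: "(nat list \<Rightarrow> nat list) \<Rightarrow> (nat list \<Rightarrow> nat list) \<Rightarrow> nat list \<Rightarrow> nat list \<Rightarrow> nat list" where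
  "graft_vmap \<alpha> \<beta> v (0 # p) = v @ 0 # \<alpha> p"
| "graft_vmap \<alpha> \<beta> v x = graft_shift v (\<beta> (dec_path x))"

lemma graft_vmap_inc_path [simp]: "graft_vmap \<alpha> \<beta> v (inc_path q) = graft_shift v (\<beta> q)"
  by (cases q) auto

lemma bij_betw_graft_vmap:
  assumes \<alpha>: "bij_betw \<alpha> (vset t1) (vset a)" and \<beta>: "bij_betw \<beta> (vset (PNode ts)) (vset b)"
    and v: "v \<in> vset b"
  shows "bij_betw (graft_vmap \<alpha> \<beta> v) (vset (PNode (t1 # ts))) (vset (graft_at a v b))"
proof (rule bij_betw_imageI)
  show "inj_on (graft_vmap \<alpha> \<beta> v) (vset (PNode (t1 # ts)))"
  proof (rule inj_onI)
    fix x y assume x: "x \<in> vset (PNode (t1 # ts))" and y: "y \<in> vset (PNode (t1 # ts))"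
      and eq: "graft_vmap \<alpha> \<beta> v x = graft_vmap \<alpha> \<beta> v y"
    from x y eq show "x = y"
      by (elim vset_PNode_Cons_cases)
        (use \<alpha> \<beta> in \<open>auto simp: bij_betw_def inj_on_def\<close>)
  qed
  have "graft_vmap \<alpha> \<beta> v ` vset (PNode (t1 # ts))
      = (\<lambda>p. v @ 0 # p) ` \<alpha> ` vset t1 \<union> graft_shift v ` \<beta> ` vset (PNode ts)"
    unfolding vset_PNode_Cons image_Un image_image by simp
  also have "\<dots> = vset (graft_at a v b)"
    using vset_graft_at[OF v] \<alpha> \<beta> by (simp add: bij_betw_def)
  finally show "graft_vmap \<alpha> \<beta> v ` vset (PNode (t1 # ts)) = vset (graft_at a v b)" .
qed

lemma pullback_order_graft_vmap:
  assumes \<beta>: "inj_on \<beta> (vset (PNode ts))" and p0: "p0 \<in> vset (PNode ts)"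
  shows "pullback_order (vset (PNode (t1 # ts))) (graft_vmap \<alpha> \<beta> (\<beta> p0))
       = graft_order t1 (pullback_order (vset t1) \<alpha>) (pullback_order (vset (PNode ts)) \<beta>) p0"
    (is "?L = ?R")
proof (intro set_eqI)
  fix z
  have "?R \<subseteq> vset (PNode (t1 # ts)) \<times> vset (PNode (t1 # ts))"
    using p0 by (auto simp: pullback_order_def elim!: graft_order_cases)
  moreover have "?L \<subseteq> vset (PNode (t1 # ts)) \<times> vset (PNode (t1 # ts))"
    by (auto simp: pullback_order_def)
  moreover have "(u, w) \<in> ?L \<longleftrightarrow> (u, w) \<in> ?R"
    if u: "u \<in> vset (PNode (t1 # ts))" and w: "w \<in> vset (PNode (t1 # ts))" for u w
    using u w
    by (elim vset_PNode_Cons_cases)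
      (use \<beta> p0 in \<open>auto simp: pullback_order_def prefix_order.le_less inj_on_def\<close>)
  ultimately show "z \<in> ?L \<longleftrightarrow> z \<in> ?R" by (cases z) blast
qed

lemma pullback_orders_graft_at:
  assumes \<beta>: "bij_betw \<beta> (vset (PNode ts)) (vset b)"
  shows "image_mset (\<lambda>v. pullback_order (vset (PNode (t1 # ts))) (graft_vmap \<alpha> \<beta> v)) (mset_set (vset b))
    = image_mset (graft_order t1 (pullback_order (vset t1) \<alpha>) (pullback_order (vset (PNode ts)) \<beta>))
        (mset_set (vset (PNode ts)))"
proof -
  have "mset_set (vset b) = image_mset \<beta> (mset_set (vset (PNode ts)))"
    using \<beta> by (simp add: image_mset_mset_set bij_betw_def)
  then have "image_mset (\<lambda>v. pullback_order (vset (PNode (t1 # ts))) (graft_vmap \<alpha> \<beta> v)) (mset_set (vset b))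
    = image_mset (\<lambda>p. pullback_order (vset (PNode (t1 # ts))) (graft_vmap \<alpha> \<beta> (\<beta> p)))
        (mset_set (vset (PNode ts)))"
    by (simp add: image_mset.compositionality o_def)
  also have "\<dots> = image_mset (graft_order t1 (pullback_order (vset t1) \<alpha>) (pullback_order (vset (PNode ts)) \<beta>))
        (mset_set (vset (PNode ts)))"
    using \<beta> by (intro image_mset_cong pullback_order_graft_vmap) (auto simp: bij_betw_def)
  finally show ?thesis .
qed

text \<open>\<open>Psi\<close>, with each term paired with the bijection from the vertices of the argument onto
  its own vertices.\<close>

fun Psi_tracked :: "ptree \<Rightarrow> (ptree \<times> (nat list \<Rightarrow> nat list)) multiset" where
  "Psi_tracked (PNode []) = {#(PNode [], id)#}"
| "Psi_tracked (PNode (t1 # ts)) =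
     \<Sum>\<^sub># (image_mset (\<lambda>(a, \<alpha>). \<Sum>\<^sub># (image_mset (\<lambda>(b, \<beta>).
        image_mset (\<lambda>v. (graft_at a v b, graft_vmap \<alpha> \<beta> v)) (mset_set (vset b)))
      (Psi_tracked (PNode ts)))) (Psi_tracked t1))"

lemma image_mset_fst_Psi_tracked: "image_mset fst (Psi_tracked \<tau>) = Psi \<tau>"
proof (induction \<tau> rule: Psi.induct)
  case (2 t1 ts)
  have "image_mset fst (Psi_tracked (PNode (t1 # ts))) =
      \<Sum>\<^sub># (image_mset (\<lambda>a. \<Sum>\<^sub># (image_mset (\<lambda>b. graft a b)
        (image_mset fst (Psi_tracked (PNode ts))))) (image_mset fst (Psi_tracked t1)))"
    by (simp add: image_mset_sum_mset image_mset.compositionality o_def case_prod_beta graft_def)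
  also have "\<dots> = Psi (PNode (t1 # ts))" using 2 by (simp add: graft_ms_def)
  finally show ?case .
qed simp

lemma bij_betw_Psi_tracked:
  "x \<in># Psi_tracked \<tau> \<Longrightarrow> bij_betw (snd x) (vset \<tau>) (vset (fst x))"
proof (induction \<tau> arbitrary: x rule: Psi.induct)
  case (2 t1 ts)
  then obtain a \<alpha> b \<beta> v where "(a, \<alpha>) \<in># Psi_tracked t1" "(b, \<beta>) \<in># Psi_tracked (PNode ts)"
    "v \<in> vset b" "x = (graft_at a v b, graft_vmap \<alpha> \<beta> v)"
    by (auto split: prod.splits)
  then show ?case using 2 bij_betw_graft_vmap by fastforce
qed simp

lemma pullback_orders_Psi_tracked:
  "image_mset (\<lambda>x. pullback_order (vset \<tau>) (snd x)) (Psi_tracked \<tau>) = mset_set (admissible_orders \<tau>)"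
proof (induction \<tau> rule: Psi.induct)
  case 1
  then show ?case by (simp add: admissible_orders_leaf pullback_order_def)
next
  case (2 t1 ts)
  let ?\<tau>2 = "PNode ts"
  let ?ord = "\<lambda>t x. pullback_order (vset t) (snd x)"
  have graft: "image_mset (\<lambda>v. pullback_order (vset (PNode (t1 # ts))) (graft_vmap (snd x) (snd y) v))
        (mset_set (vset (fst y)))
      = image_mset (graft_order t1 (?ord t1 x) (?ord ?\<tau>2 y)) (mset_set (vset ?\<tau>2))"
    if "y \<in># Psi_tracked ?\<tau>2" for x y
    using bij_betw_Psi_tracked[OF that] by (rule pullback_orders_graft_at)
  have "image_mset (?ord (PNode (t1 # ts))) (Psi_tracked (PNode (t1 # ts)))
     = \<Sum>\<^sub># (image_mset (\<lambda>x. \<Sum>\<^sub># (image_mset (\<lambda>y.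
          image_mset (\<lambda>v. pullback_order (vset (PNode (t1 # ts))) (graft_vmap (snd x) (snd y) v))
            (mset_set (vset (fst y))))
        (Psi_tracked ?\<tau>2))) (Psi_tracked t1))"
    by (simp add: image_mset_sum_mset image_mset.compositionality o_def case_prod_beta)
  also have "\<dots> = \<Sum>\<^sub># (image_mset (\<lambda>x. \<Sum>\<^sub># (image_mset (\<lambda>y.
          image_mset (graft_order t1 (?ord t1 x) (?ord ?\<tau>2 y)) (mset_set (vset ?\<tau>2)))
        (Psi_tracked ?\<tau>2))) (Psi_tracked t1))"
    by (intro arg_cong[where f = sum_mset] image_mset_cong) (simp add: graft)
  also have "\<dots> = \<Sum>\<^sub># (image_mset (\<lambda>R1. \<Sum>\<^sub># (image_mset (\<lambda>R2.
          image_mset (graft_order t1 R1 R2) (mset_set (vset ?\<tau>2)))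
        (image_mset (?ord ?\<tau>2) (Psi_tracked ?\<tau>2)))) (image_mset (?ord t1) (Psi_tracked t1)))"
    by (simp add: image_mset.compositionality o_def)
  also have "\<dots> = image_mset (\<lambda>(R1, R2, p). graft_order t1 R1 R2 p)
      (mset_set (admissible_orders t1 \<times> admissible_orders ?\<tau>2 \<times> vset ?\<tau>2))"
    using 2 by (simp add: mset_set_Times finite_admissible_orders image_mset_sum_mset
        image_mset.compositionality o_def)
  also have "\<dots> = mset_set (admissible_orders (PNode (t1 # ts)))"
    using bij_betw_graft_order by (simp add: image_mset_mset_set bij_betw_def)
  finally show ?case .
qed

section \<open>Counting the bijections\<close>

definition tree_autos :: "ptree \<Rightarrow> (nat list \<Rightarrow> nat list) set" where
  "tree_autos s = {g \<in> vset s \<rightarrow>\<^sub>E vset s. tree_iso s s g}"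

lemma symf_eq_card_tree_autos: "symf s = card (tree_autos s)"
proof -
  have eq: "bij_betw g (vset s) (vset s)
      \<and> (\<forall>v\<in>vset s. \<forall>w\<in>vset s. strict_prefix v w \<longrightarrow> strict_prefix (g v) (g w))
      \<and> (\<forall>x\<in>vset s. \<forall>y\<in>vset s. strict_prefix x y \<longrightarrow>
            strict_prefix (inv_into (vset s) g x) (inv_into (vset s) g y))
    \<longleftrightarrow> tree_iso s s g" for g
  proof (cases "bij_betw g (vset s) (vset s)")
    case True
    then show ?thesis
      using bij_betw_ball_inv_into_iff[OF True, of strict_prefix strict_prefix]
      unfolding tree_iso_def by blast
  qed (simp add: tree_iso_def)
  show ?thesis unfolding symf_def tree_autos_def by (simp only: eq)
qed

lemma symf_pos: "symf s > 0"
proof -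
  have "restrict id (vset s) \<in> tree_autos s"
    by (auto simp: tree_autos_def tree_iso_def bij_betw_def inj_on_def)
  moreover have "finite (tree_autos s)"
    by (rule finite_subset[of _ "vset s \<rightarrow>\<^sub>E vset s"]) (auto simp: tree_autos_def finite_PiE)
  ultimately show ?thesis by (auto simp: symf_eq_card_tree_autos card_gt_0_iff)
qed

definition tree_order_isos :: "ptree \<Rightarrow> 'a set \<Rightarrow> 'a rel \<Rightarrow> (nat list \<Rightarrow> 'a) set" where
  "tree_order_isos \<sigma> A R = {\<phi> \<in> vset \<sigma> \<rightarrow>\<^sub>E A. bij_betw \<phi> (vset \<sigma>) A
      \<and> (\<forall>v\<in>vset \<sigma>. \<forall>w\<in>vset \<sigma>. (\<phi> v, \<phi> w) \<in> R \<longleftrightarrow> strict_prefix v w)}"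

lemma tree_order_isos_determine_order:
  assumes "\<phi> \<in> tree_order_isos \<sigma> A R" "\<phi> \<in> tree_order_isos \<sigma> A R'"
    and "R \<subseteq> A \<times> A" "R' \<subseteq> A \<times> A"
  shows "R = R'"
proof -
  have "(\<phi> v, \<phi> w) \<in> R \<longleftrightarrow> (\<phi> v, \<phi> w) \<in> R'" if "v \<in> vset \<sigma>" "w \<in> vset \<sigma>" for v w
    using assms(1,2) that by (simp add: tree_order_isos_def)
  moreover have "A = \<phi> ` vset \<sigma>" using assms(1) by (simp add: tree_order_isos_def bij_betw_def)
  ultimately show ?thesis using assms(3,4) by blast
qed

lemma tree_order_isos_comp_tree_auto:
  assumes \<phi>: "\<phi> \<in> tree_order_isos \<sigma> A R" and g: "g \<in> tree_autos \<sigma>"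
  shows "restrict (\<phi> \<circ> g) (vset \<sigma>) \<in> tree_order_isos \<sigma> A R"
proof -
  have \<phi>_bij: "bij_betw \<phi> (vset \<sigma>) A"
    and \<phi>_ord: "\<And>v w. v \<in> vset \<sigma> \<Longrightarrow> w \<in> vset \<sigma> \<Longrightarrow> (\<phi> v, \<phi> w) \<in> R \<longleftrightarrow> strict_prefix v w"
    using \<phi> by (auto simp: tree_order_isos_def)
  have g_bij: "bij_betw g (vset \<sigma>) (vset \<sigma>)"
    and g_ord: "\<And>v w. v \<in> vset \<sigma> \<Longrightarrow> w \<in> vset \<sigma> \<Longrightarrow> strict_prefix v w \<longleftrightarrow> strict_prefix (g v) (g w)"
    using g by (auto simp: tree_autos_def tree_iso_def)
  have "bij_betw (\<phi> \<circ> g) (vset \<sigma>) A" using g_bij \<phi>_bij by (rule bij_betw_trans)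
  then have "bij_betw (restrict (\<phi> \<circ> g) (vset \<sigma>)) (vset \<sigma>) A"
    by (simp add: bij_betw_restrict_eq)
  moreover have g_in: "g v \<in> vset \<sigma>" if "v \<in> vset \<sigma>" for v
    using g_bij that by (simp add: bij_betwE)
  moreover have "(\<phi> (g v), \<phi> (g w)) \<in> R \<longleftrightarrow> strict_prefix v w" if "v \<in> vset \<sigma>" "w \<in> vset \<sigma>" for v w
    using \<phi>_ord[OF g_in g_in] g_ord[OF that] that by simp
  ultimately show ?thesis
    using bij_betwE[OF \<phi>_bij] by (auto simp: tree_order_isos_def)
qed

lemma tree_order_isos_inv_comp:
  assumes \<phi>: "\<phi> \<in> tree_order_isos \<sigma> A R" and \<chi>: "\<chi> \<in> tree_order_isos \<sigma> A R"
  shows "restrict (inv_into (vset \<sigma>) \<phi> \<circ> \<chi>) (vset \<sigma>) \<in> tree_autos \<sigma>"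
proof -
  have \<phi>_bij: "bij_betw \<phi> (vset \<sigma>) A" and \<chi>_bij: "bij_betw \<chi> (vset \<sigma>) A"
    and \<phi>_ord: "\<And>v w. v \<in> vset \<sigma> \<Longrightarrow> w \<in> vset \<sigma> \<Longrightarrow> (\<phi> v, \<phi> w) \<in> R \<longleftrightarrow> strict_prefix v w"
    and \<chi>_ord: "\<And>v w. v \<in> vset \<sigma> \<Longrightarrow> w \<in> vset \<sigma> \<Longrightarrow> (\<chi> v, \<chi> w) \<in> R \<longleftrightarrow> strict_prefix v w"
    using \<phi> \<chi> by (auto simp: tree_order_isos_def)
  let ?g = "inv_into (vset \<sigma>) \<phi> \<circ> \<chi>"
  have g_bij: "bij_betw ?g (vset \<sigma>) (vset \<sigma>)"
    using \<chi>_bij bij_betw_inv_into[OF \<phi>_bij] by (rule bij_betw_trans)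
  moreover have "strict_prefix v w \<longleftrightarrow> strict_prefix (?g v) (?g w)"
    if "v \<in> vset \<sigma>" "w \<in> vset \<sigma>" for v w
  proof -
    have "\<chi> v \<in> A" "\<chi> w \<in> A" using \<chi>_bij that by (simp_all add: bij_betwE)
    then have "\<phi> (?g v) = \<chi> v" "\<phi> (?g w) = \<chi> w" "?g v \<in> vset \<sigma>" "?g w \<in> vset \<sigma>"
      using \<phi>_bij by (simp_all add: bij_betw_inv_into_right bij_betw_imp_surj_on inv_into_into)
    then show ?thesis using \<phi>_ord \<chi>_ord that by metis
  qed
  ultimately show ?thesis
    using bij_betwE[OF g_bij] by (auto simp: tree_autos_def tree_iso_def bij_betw_restrict_eq)
qed

lemma card_tree_order_isos:
  assumes "tree_order_isos \<sigma> A R \<noteq> {}"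
  shows "card (tree_order_isos \<sigma> A R) = card (tree_autos \<sigma>)"
proof -
  obtain \<phi> where \<phi>: "\<phi> \<in> tree_order_isos \<sigma> A R" using assms by blast
  have \<phi>_bij: "bij_betw \<phi> (vset \<sigma>) A" using \<phi> by (simp add: tree_order_isos_def)
  have "bij_betw (\<lambda>\<chi>. restrict (inv_into (vset \<sigma>) \<phi> \<circ> \<chi>) (vset \<sigma>))
      (tree_order_isos \<sigma> A R) (tree_autos \<sigma>)"
  proof (rule bij_betw_byWitness[where f' = "\<lambda>g. restrict (\<phi> \<circ> g) (vset \<sigma>)"])
    show "\<forall>\<chi>\<in>tree_order_isos \<sigma> A R. restrict (\<phi> \<circ> restrict (inv_into (vset \<sigma>) \<phi> \<circ> \<chi>) (vset \<sigma>)) (vset \<sigma>) = \<chi>"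
      using \<phi>_bij by (auto simp: tree_order_isos_def fun_eq_iff bij_betw_inv_into_right PiE_def
          extensional_def bij_betwE)
    show "\<forall>g\<in>tree_autos \<sigma>. restrict (inv_into (vset \<sigma>) \<phi> \<circ> restrict (\<phi> \<circ> g) (vset \<sigma>)) (vset \<sigma>) = g"
      using \<phi>_bij by (auto simp: tree_autos_def fun_eq_iff bij_betw_inv_into_left PiE_def Pi_iff
          extensional_def)
  qed (use \<phi> tree_order_isos_inv_comp tree_order_isos_comp_tree_auto in blast)+
  then show ?thesis by (rule bij_betw_same_card)
qed

lemma tree_order_isos_pullback_order_iff:
  assumes \<psi>: "bij_betw \<psi> A (vset s)"
  shows "tree_order_isos \<sigma> A (pullback_order A \<psi>) \<noteq> {} \<longleftrightarrow> (\<exists>f. tree_iso \<sigma> s f)"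
proof
  assume "tree_order_isos \<sigma> A (pullback_order A \<psi>) \<noteq> {}"
  then obtain \<phi> where \<phi>_bij: "bij_betw \<phi> (vset \<sigma>) A"
    and \<phi>_ord: "\<forall>v\<in>vset \<sigma>. \<forall>w\<in>vset \<sigma>. (\<phi> v, \<phi> w) \<in> pullback_order A \<psi> \<longleftrightarrow> strict_prefix v w"
    by (auto simp: tree_order_isos_def)
  have "bij_betw (\<psi> \<circ> \<phi>) (vset \<sigma>) (vset s)" using \<phi>_bij \<psi> by (rule bij_betw_trans)
  moreover have "strict_prefix v w \<longleftrightarrow> strict_prefix ((\<psi> \<circ> \<phi>) v) ((\<psi> \<circ> \<phi>) w)"
    if "v \<in> vset \<sigma>" "w \<in> vset \<sigma>" for v w
    using \<phi>_ord bij_betwE[OF \<phi>_bij] that by (auto simp: pullback_order_def)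
  ultimately show "\<exists>f. tree_iso \<sigma> s f" unfolding tree_iso_def by blast
next
  assume "\<exists>f. tree_iso \<sigma> s f"
  then obtain f where f_bij: "bij_betw f (vset \<sigma>) (vset s)"
    and f_ord: "\<And>v w. v \<in> vset \<sigma> \<Longrightarrow> w \<in> vset \<sigma> \<Longrightarrow> strict_prefix v w \<longleftrightarrow> strict_prefix (f v) (f w)"
    by (auto simp: tree_iso_def)
  let ?\<phi> = "restrict (inv_into A \<psi> \<circ> f) (vset \<sigma>)"
  have "bij_betw (inv_into A \<psi> \<circ> f) (vset \<sigma>) A"
    using f_bij bij_betw_inv_into[OF \<psi>] by (rule bij_betw_trans)
  then have "bij_betw ?\<phi> (vset \<sigma>) A" by (simp add: bij_betw_restrict_eq)
  moreover have "\<psi> (?\<phi> v) = f v" "?\<phi> v \<in> A" if "v \<in> vset \<sigma>" for v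
    using that bij_betwE[OF f_bij] \<psi>
    by (simp_all add: bij_betw_inv_into_right bij_betw_imp_surj_on inv_into_into)
  ultimately have "?\<phi> \<in> tree_order_isos \<sigma> A (pullback_order A \<psi>)"
    using f_ord by (auto simp: tree_order_isos_def pullback_order_def)
  then show "tree_order_isos \<sigma> A (pullback_order A \<psi>) \<noteq> {}" by blast
qed

lemma count_forget_Psi:
  "count (image_mset forget (Psi \<tau>)) (forget \<sigma>)
     = card {R \<in> admissible_orders \<tau>. tree_order_isos \<sigma> (vset \<tau>) R \<noteq> {}}"
proof -
  let ?iso = "\<lambda>R. tree_order_isos \<sigma> (vset \<tau>) R \<noteq> {}"
  have "forget (fst x) = forget \<sigma> \<longleftrightarrow> ?iso (pullback_order (vset \<tau>) (snd x))"
    if "x \<in># Psi_tracked \<tau>" for x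
    using tree_order_isos_pullback_order_iff[OF bij_betw_Psi_tracked[OF that]]
      forget_eq_iff_tree_iso[of \<sigma> "fst x"] by metis
  then have "filter_mset (\<lambda>x. forget (fst x) = forget \<sigma>) (Psi_tracked \<tau>)
      = filter_mset (\<lambda>x. ?iso (pullback_order (vset \<tau>) (snd x))) (Psi_tracked \<tau>)"
    by (rule filter_mset_cong0)
  then have "count (image_mset forget (Psi \<tau>)) (forget \<sigma>)
      = size (filter_mset ?iso (image_mset (\<lambda>x. pullback_order (vset \<tau>) (snd x)) (Psi_tracked \<tau>)))"
    by (simp add: count_conv_size_mset image_mset_fst_Psi_tracked[symmetric]
        image_mset.compositionality filter_mset_image_mset o_def)
  also have "\<dots> = card {R \<in> admissible_orders \<tau>. ?iso R}"
    by (simp add: pullback_orders_Psi_tracked finite_admissible_orders)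
  finally show ?thesis .
qed

lemma tree_order_iso_admissible_increasing:
  assumes R: "R \<in> admissible_orders \<tau>" and \<phi>: "\<phi> \<in> tree_order_isos \<sigma> (vset \<tau>) R"
  shows "\<forall>v\<in>vset \<sigma>. \<forall>w\<in>vset \<sigma>. strict_prefix v w \<longrightarrow> lll \<tau> (\<phi> v) (\<phi> w)"
    and "\<forall>x\<in>vset \<tau>. \<forall>y\<in>vset \<tau>. strict_prefix x y \<longrightarrow>
      strict_prefix (inv_into (vset \<sigma>) \<phi> x) (inv_into (vset \<sigma>) \<phi> y)"
proof -
  have \<phi>_bij: "bij_betw \<phi> (vset \<sigma>) (vset \<tau>)"
    and \<phi>_ord: "\<forall>v\<in>vset \<sigma>. \<forall>w\<in>vset \<sigma>. (\<phi> v, \<phi> w) \<in> R \<longleftrightarrow> strict_prefix v w"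
    using \<phi> by (auto simp: tree_order_isos_def)
  have R_prefix: "\<forall>x\<in>vset \<tau>. \<forall>y\<in>vset \<tau>. strict_prefix x y \<longrightarrow> (x, y) \<in> R"
    and R_lll: "\<forall>(x, y)\<in>R. lll \<tau> x y"
    using R by (auto simp: admissible_orders_def)
  show "\<forall>v\<in>vset \<sigma>. \<forall>w\<in>vset \<sigma>. strict_prefix v w \<longrightarrow> lll \<tau> (\<phi> v) (\<phi> w)"
    using \<phi>_ord R_lll by blast
  have "\<forall>v\<in>vset \<sigma>. \<forall>w\<in>vset \<sigma>. strict_prefix (\<phi> v) (\<phi> w) \<longrightarrow> strict_prefix v w"
    using \<phi>_ord R_prefix bij_betwE[OF \<phi>_bij] by blast
  then show "\<forall>x\<in>vset \<tau>. \<forall>y\<in>vset \<tau>. strict_prefix x y \<longrightarrow>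
      strict_prefix (inv_into (vset \<sigma>) \<phi> x) (inv_into (vset \<sigma>) \<phi> y)"
    using bij_betw_ball_inv_into_iff[OF \<phi>_bij] by blast
qed

lemma mem_UN_tree_order_isos_pullback_inv_into:
  assumes \<phi>: "\<phi> \<in> vset \<sigma> \<rightarrow>\<^sub>E vset \<tau>" and \<phi>_bij: "bij_betw \<phi> (vset \<sigma>) (vset \<tau>)"
    and fw: "\<forall>v\<in>vset \<sigma>. \<forall>w\<in>vset \<sigma>. strict_prefix v w \<longrightarrow> lll \<tau> (\<phi> v) (\<phi> w)"
    and bw: "\<forall>x\<in>vset \<tau>. \<forall>y\<in>vset \<tau>. strict_prefix x y \<longrightarrow>
      strict_prefix (inv_into (vset \<sigma>) \<phi> x) (inv_into (vset \<sigma>) \<phi> y)"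
  shows "\<phi> \<in> (\<Union>R\<in>admissible_orders \<tau>. tree_order_isos \<sigma> (vset \<tau>) R)"
proof -
  let ?\<psi> = "inv_into (vset \<sigma>) \<phi>"
  have \<psi>_bij: "bij_betw ?\<psi> (vset \<tau>) (vset \<sigma>)" using bij_betw_inv_into[OF \<phi>_bij] .
  have "\<forall>x\<in>vset \<tau>. \<forall>y\<in>vset \<tau>. strict_prefix (?\<psi> x) (?\<psi> y) \<longrightarrow> lll \<tau> x y"
    using fw bij_betwE[OF \<psi>_bij] bij_betw_inv_into_right[OF \<phi>_bij] by metis
  then have "pullback_order (vset \<tau>) ?\<psi> \<in> admissible_orders \<tau>"
    using \<psi>_bij bw by (intro pullback_order_admissible) (simp_all add: bij_betw_def)
  moreover have "\<phi> \<in> tree_order_isos \<sigma> (vset \<tau>) (pullback_order (vset \<tau>) ?\<psi>)"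
    using \<phi> \<phi>_bij bij_betwE[OF \<phi>_bij]
    by (auto simp: tree_order_isos_def pullback_order_def bij_betw_inv_into_left)
  ultimately show ?thesis by blast
qed

lemma btilde_eq_card_UN_tree_order_isos:
  "btilde \<sigma> \<tau> = card (\<Union>R\<in>admissible_orders \<tau>. tree_order_isos \<sigma> (vset \<tau>) R)"
  unfolding btilde_def
proof (intro arg_cong[where f = card] subset_antisym subsetI)
  fix \<phi> assume "\<phi> \<in> (\<Union>R\<in>admissible_orders \<tau>. tree_order_isos \<sigma> (vset \<tau>) R)"
  then obtain R where "R \<in> admissible_orders \<tau>" "\<phi> \<in> tree_order_isos \<sigma> (vset \<tau>) R" by blast
  then show "\<phi> \<in> {\<phi> \<in> vset \<sigma> \<rightarrow>\<^sub>E vset \<tau>. bij_betw \<phi> (vset \<sigma>) (vset \<tau>)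
      \<and> (\<forall>v\<in>vset \<sigma>. \<forall>w\<in>vset \<sigma>. strict_prefix v w \<longrightarrow> lll \<tau> (\<phi> v) (\<phi> w))
      \<and> (\<forall>x\<in>vset \<tau>. \<forall>y\<in>vset \<tau>. strict_prefix x y \<longrightarrow>
            strict_prefix (inv_into (vset \<sigma>) \<phi> x) (inv_into (vset \<sigma>) \<phi> y))}"
    using tree_order_iso_admissible_increasing by (auto simp: tree_order_isos_def)
qed (elim CollectE conjE, rule mem_UN_tree_order_isos_pullback_inv_into)

lemma btilde_eq_count_forget_Psi_mult_symf:
  "btilde \<sigma> \<tau> = count (image_mset forget (Psi \<tau>)) (forget \<sigma>) * symf \<sigma>"
proof -
  let ?I = "\<lambda>R. tree_order_isos \<sigma> (vset \<tau>) R"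
  have fin: "finite (?I R)" for R
    by (rule finite_subset[of _ "vset \<sigma> \<rightarrow>\<^sub>E vset \<tau>"]) (auto simp: tree_order_isos_def finite_PiE)
  have disj: "?I R \<inter> ?I R' = {}"
    if "R \<in> admissible_orders \<tau>" "R' \<in> admissible_orders \<tau>" "R \<noteq> R'" for R R'
    using that tree_order_isos_determine_order[of _ \<sigma> "vset \<tau>" R R']
    by (auto simp: admissible_orders_def forest_order_def)
  have "btilde \<sigma> \<tau> = card (\<Union>R\<in>admissible_orders \<tau>. ?I R)"
    by (rule btilde_eq_card_UN_tree_order_isos)
  also have "\<dots> = (\<Sum>R\<in>admissible_orders \<tau>. card (?I R))"
    using disj by (intro card_UN_disjoint) (simp_all add: finite_admissible_orders fin)
  also have "\<dots> = (\<Sum>R\<in>{R \<in> admissible_orders \<tau>. ?I R \<noteq> {}}. card (tree_autos \<sigma>))"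
    by (rule sum.mono_neutral_cong_right) (auto simp: finite_admissible_orders card_tree_order_isos)
  also have "\<dots> = count (image_mset forget (Psi \<tau>)) (forget \<sigma>) * symf \<sigma>"
    by (simp add: count_forget_Psi symf_eq_card_tree_autos)
  finally show ?thesis .
qed

theorem corollary2p5:
  fixes S :: "utree \<Rightarrow> ptree" and t :: utree
  assumes S_section: "\<And>t. forget (S t) = t"
  shows "\<forall>s \<sigma>. forget \<sigma> = s \<longrightarrow>
           real (count (image_mset forget (Psi (S t))) s)
             = real (btilde \<sigma> (S t)) / real (symf \<sigma>)"
proof (intro allI impI)
  fix s \<sigma> assume "forget \<sigma> = s"
  then show "real (count (image_mset forget (Psi (S t))) s) = real (btilde \<sigma> (S t)) / real (symf \<sigma>)"
    using symf_pos[of \<sigma>] by (simp add: btilde_eq_count_forget_Psi_mult_symf)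
qed

end
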